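(* For each $n\ge3$, the algebra $\mathcal P_n$ defined by $\mathcal P_3=\mathcal{TC}$ and $\mathcal P_n=\mathcal P_{n-1}\sqcup\mathbf 2$ for $n>3$ is a BCK-algebra of order $n$ with $\operatorname{pid}(\mathcal P_n)=\frac{n^2-1}{n^2}$. Consequently the equation $(x\cdot y)\cdot y=x\cdot y$ has no finite satisfiability gap among BCK-algebras.
   Context: A BCK-algebra is a set $A$ with a binary operation $\cdot$ and a constant $0$ such that for all $x,y,z\in A$: (BCK1) $((x\cdot y)\cdot(x\cdot z))\cdot(z\cdot y)=0$; (BCK2) $(x\cdot(x\cdot y))\cdot y=0$; (BCK3) $x\cdot x=0$; (BCK4) $0\cdot x=0$; (BCK5) $x\cdot y=0$ and $y\cdot x=0$ imply $x=y$. For finite $\mathcal A$, $\operatorname{pid}(\mathcal A)=|\{(x,y)\in A^2:(x\cdot y)\cdot y=x\cdot y\}|/|A|^2$. $\mathcal{TC}$ is the BCK-algebra on $\{0,1,2\}$ with $x\cdot y=\max\{x-y,0\}$. $\mathbf 2$ is a two-element BCK-algebra $\{0,b\}$ with $b\cdot0=b$ and other products $0$, $b$ a new element. For BCK-algebras $\mathcal A,\mathcal B$ with $A\cap B=\{0\}$, the BCK-union $\mathcal A\sqcup\mathcal B$ has carrier $A\cup B$, with $x\cdot y$ computed in $\mathcal A$ if $x,y\in A$, in $\mathcal B$ if $x,y\in B$, and $x\cdot y=x$ otherwise. An equation has no finite satisfiability gap in a class if for every $\epsilon>0$ some finite member has degree of satisfiability strictly between $1-\epsilon$ and $1$. *)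

theory Defs
  imports Complex_Main
begin

definition bck_algebra :: "'a set \<Rightarrow> ('a \<Rightarrow> 'a \<Rightarrow> 'a) \<Rightarrow> 'a \<Rightarrow> bool" where
  "bck_algebra A m z \<longleftrightarrow> z \<in> A \<and> (\<forall>x\<in>A. \<forall>y\<in>A. m x y \<in> A) \<and>
     (\<forall>x\<in>A. \<forall>y\<in>A. \<forall>w\<in>A. m (m (m x y) (m x w)) (m w y) = z) \<and>
     (\<forall>x\<in>A. \<forall>y\<in>A. m (m x (m x y)) y = z) \<and>
     (\<forall>x\<in>A. m x x = z) \<and>
     (\<forall>x\<in>A. m z x = z) \<and>
     (\<forall>x\<in>A. \<forall>y\<in>A. m x y = z \<and> m y x = z \<longrightarrow> x = y)"

definition pid :: "'a set \<Rightarrow> ('a \<Rightarrow> 'a \<Rightarrow> 'a) \<Rightarrow> real" where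
  "pid A m = real (card {(x, y). x \<in> A \<and> y \<in> A \<and> m (m x y) y = m x y}) / real (card A) ^ 2"

text \<open>TC: carrier {0,1,2}, x*y = max(x-y,0) (truncated nat subtraction).\<close>
definition tc_op :: "nat \<Rightarrow> nat \<Rightarrow> nat" where
  "tc_op x y = x - y"

definition two_op :: "'a::zero \<Rightarrow> 'a \<Rightarrow> 'a \<Rightarrow> 'a" where
  "two_op b x y = (if x = b \<and> y = 0 then b else 0)"

text \<open>BCK-union of (A,f) and (B,g) (with A \<inter> B = {0}).\<close>
definition bck_union_op :: "'a set \<Rightarrow> ('a \<Rightarrow> 'a \<Rightarrow> 'a) \<Rightarrow> 'a set \<Rightarrow> ('a \<Rightarrow> 'a \<Rightarrow> 'a) \<Rightarrow> 'a \<Rightarrow> 'a \<Rightarrow> 'a" where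
  "bck_union_op A f B g x y =
     (if x \<in> A \<and> y \<in> A then f x y else if x \<in> B \<and> y \<in> B then g x y else x)"

fun P_car :: "nat \<Rightarrow> nat set" where
  "P_car n = (if n \<le> 3 then {0, 1, 2} else P_car (n - 1) \<union> {n - 1})"

fun P_op :: "nat \<Rightarrow> nat \<Rightarrow> nat \<Rightarrow> nat" where
  "P_op n = (if n \<le> 3 then tc_op
             else bck_union_op (P_car (n - 1)) (P_op (n - 1)) {0, n - 1} (two_op (n - 1)))"

declare P_car.simps [simp del] P_op.simps [simp del]

end

theory Submission
  imports Defs
begin

text \<open>
  The pairs violating \<open>(x \<cdot> y) \<cdot> y = x \<cdot> y\<close> in a BCK-union \<open>A \<squnion> B\<close> are exactly those
  violating it in \<open>A\<close> or in \<open>B\<close>: for \<open>x\<close> and \<open>y\<close> on different sides \<open>x \<cdot> y = x\<close>, so the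
  equation holds. In TC the only violating pair is \<open>(2, 1)\<close> and in \<open>2\<close> there is none, hence
  \<open>P\<^sub>n\<close> has exactly one violating pair among its \<open>n\<^sup>2\<close> pairs and \<open>pid P\<^sub>n = 1 - 1/n\<^sup>2\<close>,
  which is below 1 but tends to 1.
\<close>

definition pid_failures :: "'a set \<Rightarrow> ('a \<Rightarrow> 'a \<Rightarrow> 'a) \<Rightarrow> ('a \<times> 'a) set" where
  "pid_failures A m = {(x, y) \<in> A \<times> A. m (m x y) y \<noteq> m x y}"

lemma pid_eq_one_minus_failures:
  assumes "finite A" "A \<noteq> {}"
  shows "pid A m = 1 - real (card (pid_failures A m)) / real (card A) ^ 2"
proof -
  have sat: "{(x, y). x \<in> A \<and> y \<in> A \<and> m (m x y) y = m x y} = A \<times> A - pid_failures A m"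
    by (auto simp: pid_failures_def)
  have sub: "pid_failures A m \<subseteq> A \<times> A"
    by (auto simp: pid_failures_def)
  then have "card (A \<times> A - pid_failures A m) = card A ^ 2 - card (pid_failures A m)"
    using assms by (simp add: card_Diff_subset finite_subset card_cartesian_product power2_eq_square)
  moreover have "card (pid_failures A m) \<le> card A ^ 2"
    using sub assms
    by (metis card_cartesian_product card_mono finite_cartesian_product power2_eq_square)
  ultimately show ?thesis
    using assms unfolding pid_def sat by (simp add: field_simps)
qed

lemma
  assumes "bck_algebra A m z"
  shows bck_zero_mem: "z \<in> A"
    and bck_closed: "x \<in> A \<Longrightarrow> y \<in> A \<Longrightarrow> m x y \<in> A"
    and bck_axiom1: "x \<in> A \<Longrightarrow> y \<in> A \<Longrightarrow> w \<in> A \<Longrightarrow> m (m (m x y) (m x w)) (m w y) = z"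
    and bck_axiom2: "x \<in> A \<Longrightarrow> y \<in> A \<Longrightarrow> m (m x (m x y)) y = z"
    and bck_self: "x \<in> A \<Longrightarrow> m x x = z"
    and bck_zero_left: "x \<in> A \<Longrightarrow> m z x = z"
    and bck_antisym: "x \<in> A \<Longrightarrow> y \<in> A \<Longrightarrow> m x y = z \<Longrightarrow> m y x = z \<Longrightarrow> x = y"
  using assms unfolding bck_algebra_def by blast+

lemma bck_right_zero:
  assumes "bck_algebra A m z" "x \<in> A"
  shows "m x z = x"
proof (rule bck_antisym[OF assms(1)])
  show "m (m x z) x = z"
    using bck_axiom2[OF assms(1,2,2)] by (simp add: bck_self[OF assms])
  have "m x (m x z) \<in> A"
    using assms by (simp add: bck_closed bck_zero_mem)
  moreover have "m (m x (m x z)) z = z" "m z (m x (m x z)) = z"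
    using assms calculation by (simp_all add: bck_axiom2 bck_zero_left bck_zero_mem)
  ultimately show "m x (m x z) = z"
    using bck_antisym[OF assms(1)] bck_zero_mem[OF assms(1)] by blast
qed (simp_all add: assms bck_closed[OF assms(1)] bck_zero_mem[OF assms(1)])

lemma bck_diff_le:
  assumes "bck_algebra A m z" "x \<in> A" "y \<in> A"
  shows "m (m x y) x = z"
proof -
  have "m (m (m x y) (m x z)) (m z y) = z"
    using assms by (simp add: bck_axiom1 bck_zero_mem)
  then show ?thesis
    using assms by (simp add: bck_right_zero bck_zero_left bck_closed)
qed

context
  fixes A B :: "'a set" and f g :: "'a \<Rightarrow> 'a \<Rightarrow> 'a" and z :: 'a
  assumes AB: "A \<inter> B = {z}" and A: "bck_algebra A f z" and B: "bck_algebra B g z"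
begin

private lemma union_op_left: "x \<in> A \<Longrightarrow> y \<in> A \<Longrightarrow> bck_union_op A f B g x y = f x y"
  by (simp add: bck_union_op_def)

private lemma union_op_right: "x \<in> B \<Longrightarrow> y \<in> B \<Longrightarrow> bck_union_op A f B g x y = g x y"
proof (cases "x \<in> A \<and> y \<in> A")
  case True
  assume "x \<in> B" "y \<in> B"
  with True AB have "x = z" "y = z" by auto
  then show ?thesis
    using bck_self[OF A] bck_self[OF B] bck_zero_mem[OF A] bck_zero_mem[OF B]
    by (simp add: bck_union_op_def)
qed (auto simp: bck_union_op_def)

private lemma union_inter: "x \<in> A \<Longrightarrow> x \<in> B \<Longrightarrow> x = z"
  using AB by blast

private lemma union_op_cross:
  "x \<in> A \<Longrightarrow> y \<in> B - A \<Longrightarrow> bck_union_op A f B g x y = x"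
  "x \<in> B \<Longrightarrow> y \<in> A - B \<Longrightarrow> bck_union_op A f B g x y = x"
  using bck_zero_left[OF B] bck_zero_left[OF A] union_inter by (auto simp: bck_union_op_def)

private lemma union_cases: "x \<in> A \<union> B \<Longrightarrow> x = z \<or> x \<in> A - B \<or> x \<in> B - A"
  using AB by blast

private lemmas union_simps = union_op_left union_op_right union_op_cross
  bck_zero_mem[OF A] bck_zero_mem[OF B] bck_closed[OF A] bck_closed[OF B]
  bck_self[OF A] bck_self[OF B] bck_zero_left[OF A] bck_zero_left[OF B]
  bck_right_zero[OF A] bck_right_zero[OF B] bck_diff_le[OF A] bck_diff_le[OF B]
  bck_axiom1[OF A] bck_axiom1[OF B] bck_axiom2[OF A] bck_axiom2[OF B]

lemma bck_algebra_union: "bck_algebra (A \<union> B) (bck_union_op A f B g) z"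
  unfolding bck_algebra_def
proof (intro conjI ballI impI)
  let ?h = "bck_union_op A f B g"
  show "z \<in> A \<union> B"
    using AB by auto
  fix x y w assume x: "x \<in> A \<union> B" and y: "y \<in> A \<union> B" and w: "w \<in> A \<union> B"
  show "?h x y \<in> A \<union> B"
    using union_cases[OF x] union_cases[OF y] by (elim disjE; simp add: union_simps)
  show "?h (?h (?h x y) (?h x w)) (?h w y) = z"
    using union_cases[OF x] union_cases[OF y] union_cases[OF w]
    by (elim disjE; simp add: union_simps)
  show "?h (?h x (?h x y)) y = z"
    using union_cases[OF x] union_cases[OF y] by (elim disjE; simp add: union_simps)
  show "?h x x = z" "?h z x = z"
    using union_cases[OF x] by (elim disjE; auto simp: union_simps)+
  show "x = y" if "?h x y = z \<and> ?h y x = z"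
    using that union_cases[OF x] union_cases[OF y]
    by (elim disjE) (auto simp: union_simps bck_antisym[OF A] bck_antisym[OF B])
qed

lemma pid_failures_union:
  "pid_failures (A \<union> B) (bck_union_op A f B g) = pid_failures A f \<union> pid_failures B g"
proof -
  have "bck_union_op A f B g (bck_union_op A f B g x y) y \<noteq> bck_union_op A f B g x y \<longleftrightarrow>
      (x \<in> A \<and> y \<in> A \<and> f (f x y) y \<noteq> f x y) \<or> (x \<in> B \<and> y \<in> B \<and> g (g x y) y \<noteq> g x y)"
    if "x \<in> A \<union> B" "y \<in> A \<union> B" for x y
    using union_cases[OF that(1)] union_cases[OF that(2)]
    by (elim disjE; simp add: union_simps)
  then show ?thesis
    unfolding pid_failures_def by auto
qed

end

lemma bck_algebra_tc: "bck_algebra {..k} tc_op 0"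
  unfolding bck_algebra_def tc_op_def by auto

lemma pid_failures_tc: "pid_failures {0, 1, 2} tc_op = {(2, 1)}"
  unfolding pid_failures_def tc_op_def by auto

lemma bck_algebra_two:
  fixes b :: "'a::zero"
  assumes "b \<noteq> 0"
  shows "bck_algebra {0, b} (two_op b) 0"
  using assms unfolding bck_algebra_def two_op_def by auto

lemma pid_failures_two: "pid_failures {0, b} (two_op b) = {}"
  unfolding pid_failures_def two_op_def by auto

lemma P_car_3: "P_car 3 = {0, 1, 2}"
  by (simp add: P_car.simps[of 3])

lemma P_car_eq: "n \<ge> 3 \<Longrightarrow> P_car n = {..<n}"
proof (induction n rule: nat_induct_at_least)
  case base
  have "P_car 3 = {0, 1, 2}"
    by (rule P_car_3)
  also have "\<dots> = {..<3}"
    by (auto simp: lessThan_nat_numeral)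
  finally show ?case .
next
  case (Suc n)
  have "P_car (Suc n) = P_car n \<union> {n}"
    using Suc.hyps by (simp add: P_car.simps[of "Suc n"])
  then show ?case
    using Suc.IH lessThan_Suc by auto
qed

lemma P_op_Suc:
  "n \<ge> 3 \<Longrightarrow> P_op (Suc n) = bck_union_op (P_car n) (P_op n) {0, n} (two_op n)"
  by (simp add: P_op.simps[of "Suc n"])

lemma bck_algebra_P_and_pid_failures:
  "n \<ge> 3 \<Longrightarrow> bck_algebra (P_car n) (P_op n) 0 \<and> pid_failures (P_car n) (P_op n) = {(2, 1)}"
proof (induction n rule: nat_induct_at_least)
  case base
  have "{..2::nat} = {0, 1, 2}"
    by (auto simp: atMost_nat_numeral)
  moreover have "P_op 3 = tc_op"
    by (simp add: P_op.simps[of 3])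
  ultimately show ?case
    using bck_algebra_tc[of 2] pid_failures_tc by (simp add: P_car_3)
next
  case (Suc n)
  have disj: "P_car n \<inter> {0, n} = {0}"
    using Suc.hyps by (auto simp: P_car_eq)
  have car: "P_car (Suc n) = P_car n \<union> {0, n}"
    using Suc.hyps by (auto simp: P_car_eq)
  have two: "bck_algebra {0, n} (two_op n) 0"
    using Suc.hyps by (intro bck_algebra_two) simp
  show ?case
    unfolding car P_op_Suc[OF Suc.hyps]
    using bck_algebra_union[OF disj _ two] pid_failures_union[OF disj _ two] Suc.IH
    by (simp add: pid_failures_two)
qed

lemma pid_P:
  assumes "n \<ge> 3"
  shows "pid (P_car n) (P_op n) = 1 - 1 / real n ^ 2"
proof -
  have "{..<n} \<noteq> {}"
    using assms by (auto simp: lessThan_empty_iff)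
  then show ?thesis
    using assms bck_algebra_P_and_pid_failures[OF assms]
    by (simp add: pid_eq_one_minus_failures P_car_eq)
qed

lemma ex_inverse_square_less:
  fixes \<epsilon> :: real
  assumes "\<epsilon> > 0"
  shows "\<exists>n::nat. n \<ge> 3 \<and> 1 / real n ^ 2 < \<epsilon>"
proof -
  obtain k :: nat where k: "1 / \<epsilon> < k"
    using reals_Archimedean2 by blast
  define n where "n = max 3 k"
  have n: "n \<ge> 3" "1 / \<epsilon> < n"
    using k by (auto simp: n_def)
  have "1 / real n ^ 2 \<le> 1 / real n"
    using n by (intro divide_left_mono) (auto simp: power2_eq_square)
  also have "\<dots> < \<epsilon>"
    using assms n by (simp add: pos_divide_less_eq mult.commute)
  finally show ?thesis
    using n by blast
qed

theorem mainTheorem13: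
  shows "(\<forall>n::nat. n \<ge> 3 \<longrightarrow>
            bck_algebra (P_car n) (P_op n) 0 \<and> card (P_car n) = n \<and>
            pid (P_car n) (P_op n) = (real n ^ 2 - 1) / real n ^ 2)
       \<and> (\<forall>\<epsilon>::real. \<epsilon> > 0 \<longrightarrow>
            (\<exists>(A::nat set) m z. finite A \<and> bck_algebra A m z \<and>
               1 - \<epsilon> < pid A m \<and> pid A m < 1))"
proof (intro conjI allI impI)
  fix n :: nat assume n: "n \<ge> 3"
  then show "bck_algebra (P_car n) (P_op n) 0"
    using bck_algebra_P_and_pid_failures by blast
  show "card (P_car n) = n"
    using n by (simp add: P_car_eq)
  show "pid (P_car n) (P_op n) = (real n ^ 2 - 1) / real n ^ 2"
    using n by (simp add: pid_P field_simps)
next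
  fix \<epsilon> :: real assume "\<epsilon> > 0"
  then obtain n where n: "n \<ge> 3" and small: "1 / real n ^ 2 < \<epsilon>"
    using ex_inverse_square_less by blast
  have "0 < 1 / real n ^ 2"
    using n by simp
  with small pid_P[OF n] have "1 - \<epsilon> < pid (P_car n) (P_op n)" "pid (P_car n) (P_op n) < 1"
    by linarith+
  moreover have "finite (P_car n)"
    using n by (simp add: P_car_eq)
  ultimately show "\<exists>(A::nat set) m z. finite A \<and> bck_algebra A m z \<and> 1 - \<epsilon> < pid A m \<and> pid A m < 1"
    using bck_algebra_P_and_pid_failures[OF n] by blast
qed

end
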